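(* Let $\Theta$ be a bunch in a projected cone $(E \xrightarrow{Q} K, \gamma)$. Then for any two faces $\gamma_1, \gamma_2 \in \mathrm{cov}(\Theta)$ we have $Q(\gamma_1)^{\circ} \cap Q(\gamma_2)^{\circ} \neq \emptyset$.
   Context: A lattice is a finitely generated free abelian group; for a lattice $E$ put $E_{\mathbb Q} := \mathbb Q \otimes_{\mathbb Z} E$, and a lattice homomorphism is extended $\mathbb Q$-linearly. A cone in $E$ means a convex polyhedral (not necessarily strictly convex) cone in $E_{\mathbb Q}$; $\tau^{\circ}$ denotes the relative interior of a cone $\tau$, $\gamma_0 \preceq \gamma$ means $\gamma_0$ is a face of $\gamma$, and $\mathrm{lin}(\tau)$ is the linear span. A projected cone $(E \xrightarrow{Q} K, \gamma)$ consists of a surjective homomorphism of lattices $Q\colon E \to K$ and a simplicial cone $\gamma \subset E_{\mathbb Q}$ of full dimension. A projected face is a cone $Q(\gamma_0) \subset K_{\mathbb Q}$ with $\gamma_0 \preceq \gamma$. A bunch in $(E \xrightarrow{Q} K,\gamma)$ is a nonempty collection $\Theta$ of projected faces such that a projected face $\tau_0$ belongs to $\Theta$ if and only if $\emptyset \neq \tau_0^{\circ} \cap \tau^{\circ} \neq \tau^{\circ}$ holds for all $\tau \in \Theta$ with $\tau \neq \tau_0$. The covering collection $\mathrm{cov}(\Theta)$ is the set of faces $\gamma_0 \preceq \gamma$ which are minimal (among faces of $\gamma$, with respect to inclusion) with the property that $Q(\gamma_0) \supseteq \tau$ for some $\tau \in \Theta$. *)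

theory Defs
  imports Complex_Main
begin

text \<open>A lattice of rank n is identified with Z^n (via a chosen basis),
so its rational span is Q^n. Vectors of Q^n are modelled as functions nat => rat
vanishing at all coordinates >= n. A lattice homomorphism Z^n -> Z^m is an integer
m x n matrix, extended Q-linearly.\<close>

type_synonym qvec = "nat \<Rightarrow> rat"

definition inV :: "nat \<Rightarrow> qvec \<Rightarrow> bool" where
  "inV n x \<longleftrightarrow> (\<forall>i\<ge>n. x i = 0)"

definition lattice_vec :: "nat \<Rightarrow> qvec \<Rightarrow> bool" where
  "lattice_vec n x \<longleftrightarrow> inV n x \<and> (\<forall>i. x i \<in> \<int>)"

definition lincomb :: "(qvec \<Rightarrow> rat) \<Rightarrow> qvec set \<Rightarrow> qvec" where
  "lincomb c F = (\<lambda>i. \<Sum>s\<in>F. c s * s i)"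

definition cone_gen :: "qvec set \<Rightarrow> qvec set" where
  "cone_gen S = {lincomb c F | c F. finite F \<and> F \<subseteq> S \<and> (\<forall>s\<in>F. 0 \<le> c s)}"

definition lin_span :: "qvec set \<Rightarrow> qvec set" where
  "lin_span S = {lincomb c F | c F. finite F \<and> F \<subseteq> S}"

definition lin_indep :: "qvec set \<Rightarrow> bool" where
  "lin_indep S \<longleftrightarrow> (\<forall>F c. finite F \<longrightarrow> F \<subseteq> S \<longrightarrow> lincomb c F = (\<lambda>_. 0) \<longrightarrow> (\<forall>s\<in>F. c s = 0))"

definition simplicial_full_cone :: "nat \<Rightarrow> qvec set \<Rightarrow> bool" where
  "simplicial_full_cone n \<gamma> \<longleftrightarrow>
     (\<exists>S. finite S \<and> card S = n \<and> (\<forall>s\<in>S. inV n s) \<and> lin_indep S \<and> \<gamma> = cone_gen S)"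

definition dotp :: "nat \<Rightarrow> qvec \<Rightarrow> qvec \<Rightarrow> rat" where
  "dotp n u x = (\<Sum>i<n. u i * x i)"

definition is_face :: "nat \<Rightarrow> qvec set \<Rightarrow> qvec set \<Rightarrow> bool" where
  "is_face n \<sigma>0 \<sigma> \<longleftrightarrow>
     (\<exists>u. inV n u \<and> (\<forall>x\<in>\<sigma>. 0 \<le> dotp n u x) \<and> \<sigma>0 = {x\<in>\<sigma>. dotp n u x = 0})"

text \<open>Relative interior: points of tau having a (sup-norm) neighbourhood, relative to
the linear span (= affine hull, as cones contain 0) of tau, that lies in tau.\<close>
definition relint :: "qvec set \<Rightarrow> qvec set" where
  "relint \<tau> = {x\<in>\<tau>. \<exists>\<epsilon>>0. \<forall>y\<in>lin_span \<tau>. (\<forall>i. \<bar>y i - x i\<bar> < \<epsilon>) \<longrightarrow> y \<in> \<tau>}"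

definition qmap :: "nat \<Rightarrow> nat \<Rightarrow> (nat \<Rightarrow> nat \<Rightarrow> int) \<Rightarrow> qvec \<Rightarrow> qvec" where
  "qmap m n Q x = (\<lambda>i. if i < m then \<Sum>j<n. of_int (Q i j) * x j else 0)"

definition projected_cone :: "nat \<Rightarrow> nat \<Rightarrow> (nat \<Rightarrow> nat \<Rightarrow> int) \<Rightarrow> qvec set \<Rightarrow> bool" where
  "projected_cone m n Q \<gamma> \<longleftrightarrow>
     (\<forall>z. lattice_vec m z \<longrightarrow> (\<exists>x. lattice_vec n x \<and> qmap m n Q x = z))
     \<and> simplicial_full_cone n \<gamma>"

definition proj_face :: "nat \<Rightarrow> nat \<Rightarrow> (nat \<Rightarrow> nat \<Rightarrow> int) \<Rightarrow> qvec set \<Rightarrow> qvec set \<Rightarrow> bool" where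
  "proj_face m n Q \<gamma> \<tau> \<longleftrightarrow> (\<exists>\<gamma>0. is_face n \<gamma>0 \<gamma> \<and> \<tau> = qmap m n Q ` \<gamma>0)"

definition is_bunch :: "nat \<Rightarrow> nat \<Rightarrow> (nat \<Rightarrow> nat \<Rightarrow> int) \<Rightarrow> qvec set \<Rightarrow> qvec set set \<Rightarrow> bool" where
  "is_bunch m n Q \<gamma> \<Theta> \<longleftrightarrow>
     \<Theta> \<noteq> {} \<and> (\<forall>\<tau>\<in>\<Theta>. proj_face m n Q \<gamma> \<tau>) \<and>
     (\<forall>\<tau>0. proj_face m n Q \<gamma> \<tau>0 \<longrightarrow>
        (\<tau>0 \<in> \<Theta> \<longleftrightarrow>
          (\<forall>\<tau>\<in>\<Theta>. \<tau> \<noteq> \<tau>0 \<longrightarrow> relint \<tau>0 \<inter> relint \<tau> \<noteq> {} \<and> relint \<tau>0 \<inter> relint \<tau> \<noteq> relint \<tau>)))"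

definition cov :: "nat \<Rightarrow> nat \<Rightarrow> (nat \<Rightarrow> nat \<Rightarrow> int) \<Rightarrow> qvec set \<Rightarrow> qvec set set \<Rightarrow> qvec set set" where
  "cov m n Q \<gamma> \<Theta> =
     {\<gamma>0. is_face n \<gamma>0 \<gamma> \<and> (\<exists>\<tau>\<in>\<Theta>. \<tau> \<subseteq> qmap m n Q ` \<gamma>0) \<and>
        (\<forall>\<gamma>1. is_face n \<gamma>1 \<gamma> \<longrightarrow> \<gamma>1 \<subset> \<gamma>0 \<longrightarrow> \<not> (\<exists>\<tau>\<in>\<Theta>. \<tau> \<subseteq> qmap m n Q ` \<gamma>1))}"

end

theory Submission
  imports Defs
begin

(* For gamma_i in cov(Theta) choose tau_i in Theta with tau_i \<subseteq> Q(gamma_i). As gamma is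
   simplicial, its faces are the cones on subsets of its generators, so minimality of gamma_i
   says that tau_i lies in no cone spanned by the images of a proper subset of the generators
   of gamma_i. A point of the relative interior of tau_i then has a representation with all
   coefficients positive, hence lies in the relative interior of Q(gamma_i). The bunch
   condition makes the relative interiors of tau_1 and tau_2 meet. *)

(* Cones and spans of indexed families rather than sets: the images under Q of distinct
   generators of gamma may coincide. *)
definition lincomb_fam :: "('a \<Rightarrow> rat) \<Rightarrow> 'a set \<Rightarrow> ('a \<Rightarrow> qvec) \<Rightarrow> qvec" where
  "lincomb_fam c T f = (\<lambda>i. \<Sum>t\<in>T. c t * f t i)"

definition cone_fam :: "'a set \<Rightarrow> ('a \<Rightarrow> qvec) \<Rightarrow> qvec set" where
  "cone_fam T f = {lincomb_fam c T f | c. \<forall>t\<in>T. 0 \<le> c t}"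

definition span_fam :: "'a set \<Rightarrow> ('a \<Rightarrow> qvec) \<Rightarrow> qvec set" where
  "span_fam T f = range (\<lambda>c. lincomb_fam c T f)"

definition norm1 :: "nat \<Rightarrow> qvec \<Rightarrow> rat" where
  "norm1 m z = (\<Sum>i<m. \<bar>z i\<bar>)"

definition biorthogonal :: "nat \<Rightarrow> qvec set \<Rightarrow> (qvec \<Rightarrow> qvec) \<Rightarrow> bool" where
  "biorthogonal n S A \<longleftrightarrow> (\<forall>s\<in>S. \<forall>s'\<in>S. dotp n (A s) s' = (if s' = s then 1 else 0))"

lemma lincomb_eq_lincomb_fam: "lincomb c F = lincomb_fam c F id"
  by (simp add: lincomb_def lincomb_fam_def)

lemma lincomb_fam_cong:
  "(\<And>t. t \<in> T \<Longrightarrow> c t = d t) \<Longrightarrow> lincomb_fam c T f = lincomb_fam d T f"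
  by (auto simp: lincomb_fam_def intro!: sum.cong)

lemma lincomb_fam_zero_outside:
  assumes "finite T" "T' \<subseteq> T" "\<And>t. t \<in> T - T' \<Longrightarrow> c t = 0"
  shows "lincomb_fam c T f = lincomb_fam c T' f"
  unfolding lincomb_fam_def using assms by (intro ext sum.mono_neutral_right) auto

lemma lincomb_fam_extend:
  assumes "finite T" "T' \<subseteq> T"
  shows "lincomb_fam (\<lambda>s. if s \<in> T' then c s else 0) T f = lincomb_fam c T' f"
proof -
  have "lincomb_fam (\<lambda>s. if s \<in> T' then c s else 0) T f
      = lincomb_fam (\<lambda>s. if s \<in> T' then c s else 0) T' f"
    using assms by (intro lincomb_fam_zero_outside) auto
  also have "\<dots> = lincomb_fam c T' f" by (rule lincomb_fam_cong) simp
  finally show ?thesis .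
qed

lemma lincomb_fam_empty: "lincomb_fam c {} f = (\<lambda>i. 0)"
  by (simp add: lincomb_fam_def)

lemma lincomb_fam_insert:
  "finite T \<Longrightarrow> v \<notin> T \<Longrightarrow>
    lincomb_fam c (insert v T) f = (\<lambda>i. c v * f v i + lincomb_fam c T f i)"
  by (simp add: lincomb_fam_def)

lemma lincomb_fam_add:
  "lincomb_fam (\<lambda>t. c t + d t) T f = (\<lambda>i. lincomb_fam c T f i + lincomb_fam d T f i)"
  by (simp add: lincomb_fam_def distrib_right sum.distrib)

lemma lincomb_fam_scale: "lincomb_fam (\<lambda>t. a * c t) T f = (\<lambda>i. a * lincomb_fam c T f i)"
  by (simp add: lincomb_fam_def sum_distrib_left mult.assoc)

lemma lincomb_fam_diff:
  "lincomb_fam (\<lambda>t. c t - d t) T f = (\<lambda>i. lincomb_fam c T f i - lincomb_fam d T f i)"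
  by (simp add: lincomb_fam_def left_diff_distrib sum_subtractf)

lemma lincomb_fam_sum:
  "lincomb_fam (\<lambda>s. \<Sum>u\<in>U. C u s) T f i = (\<Sum>u\<in>U. lincomb_fam (C u) T f i)"
  by (simp add: lincomb_fam_def sum_distrib_right sum.swap[of _ T])

lemma lincomb_fam_indicator:
  assumes "finite T" "t \<in> T"
  shows "lincomb_fam (\<lambda>s. if s = t then 1 else 0) T f = f t"
proof (rule ext)
  fix i
  have "lincomb_fam (\<lambda>s. if s = t then 1 else 0) T f i = (\<Sum>s\<in>T. if s = t then f s i else 0)"
    unfolding lincomb_fam_def by (rule sum.cong) auto
  then show "lincomb_fam (\<lambda>s. if s = t then 1 else 0) T f i = f t i"
    using assms by simp
qed

lemma dotp_lincomb_fam: "dotp k a (lincomb_fam c T f) = (\<Sum>t\<in>T. c t * dotp k a (f t))"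
  unfolding dotp_def lincomb_fam_def
  by (simp add: sum_distrib_left sum.swap[of _ T] mult.left_commute)

lemma dotp_diff_left: "dotp k (\<lambda>j. a j - r * b j) x = dotp k a x - r * dotp k b x"
  by (simp add: dotp_def left_diff_distrib sum_subtractf sum_distrib_left mult.assoc)

lemma dotp_diff_right: "dotp k a (\<lambda>j. x j - r * y j) = dotp k a x - r * dotp k a y"
  by (simp add: dotp_def right_diff_distrib sum_subtractf sum_distrib_left mult.left_commute)

lemma generator_in_cone_fam: "finite T \<Longrightarrow> t \<in> T \<Longrightarrow> f t \<in> cone_fam T f"
  unfolding cone_fam_def using lincomb_fam_indicator[of T t f]
  by (auto intro!: exI[of _ "\<lambda>s. if s = t then 1 else 0"])

lemma cone_fam_mono: assumes "finite T" "T' \<subseteq> T" shows "cone_fam T' f \<subseteq> cone_fam T f"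
proof
  fix x assume "x \<in> cone_fam T' f"
  then obtain c where c: "x = lincomb_fam c T' f" "\<forall>t\<in>T'. 0 \<le> c t"
    by (auto simp: cone_fam_def)
  then show "x \<in> cone_fam T f"
    using lincomb_fam_extend[OF assms, of c f] unfolding cone_fam_def
    by (auto intro!: exI[of _ "\<lambda>s. if s \<in> T' then c s else 0"])
qed

lemma span_fam_mono: assumes "finite T" "T' \<subseteq> T" shows "span_fam T' f \<subseteq> span_fam T f"
  using lincomb_fam_extend[OF assms] unfolding span_fam_def
  by (metis (no_types, lifting) image_subsetI rangeI)

lemma cone_gen_eq_cone_fam: assumes "finite S" shows "cone_gen S = cone_fam S id"
proof
  show "cone_gen S \<subseteq> cone_fam S id"
  proof
    fix x assume "x \<in> cone_gen S"
    then obtain c F where x: "x = lincomb c F" "F \<subseteq> S" "\<forall>s\<in>F. 0 \<le> c s"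
      unfolding cone_gen_def by blast
    then have "x \<in> cone_fam F id" by (auto simp: cone_fam_def lincomb_eq_lincomb_fam)
    then show "x \<in> cone_fam S id" using cone_fam_mono[OF assms x(2)] by blast
  qed
  show "cone_fam S id \<subseteq> cone_gen S"
    unfolding cone_gen_def cone_fam_def lincomb_eq_lincomb_fam using assms by blast
qed

lemma qmap_lincomb_fam: "qmap m n Q (lincomb_fam c T id) = lincomb_fam c T (qmap m n Q)"
  unfolding qmap_def lincomb_fam_def
  by (rule ext) (auto simp: sum_distrib_left sum.swap[of _ T] mult.left_commute)

lemma qmap_image_cone_fam: "qmap m n Q ` cone_fam T id = cone_fam T (qmap m n Q)"
  unfolding cone_fam_def by (force simp: qmap_lincomb_fam image_iff)

lemma inV_lincomb_fam: "\<forall>t\<in>T. inV m (f t) \<Longrightarrow> inV m (lincomb_fam c T f)"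
  by (simp add: inV_def lincomb_fam_def)

lemma inV_qmap: "inV m (qmap m n Q x)"
  by (simp add: inV_def qmap_def)

lemma norm1_nonneg: "0 \<le> norm1 m z"
  by (simp add: norm1_def sum_nonneg)

lemma abs_le_norm1: "i < m \<Longrightarrow> \<bar>z i\<bar> \<le> norm1 m z"
  unfolding norm1_def by (rule member_le_sum) auto

lemma abs_dotp_le: "\<bar>dotp m a z\<bar> \<le> norm1 m a * norm1 m z"
proof -
  have "\<bar>dotp m a z\<bar> \<le> (\<Sum>i<m. \<bar>a i\<bar> * \<bar>z i\<bar>)"
    unfolding dotp_def using sum_abs[of "\<lambda>i. a i * z i" "{..<m}"] by (simp add: abs_mult)
  also have "\<dots> \<le> (\<Sum>i<m. \<bar>a i\<bar> * norm1 m z)"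
    by (intro sum_mono mult_left_mono abs_le_norm1) auto
  also have "\<dots> = norm1 m a * norm1 m z" by (simp add: norm1_def sum_distrib_right)
  finally show ?thesis .
qed

lemma lin_span_cone_fam_subset: "lin_span (cone_fam T f) \<subseteq> span_fam T f"
proof
  fix y assume "y \<in> lin_span (cone_fam T f)"
  then obtain c F where y: "y = lincomb c F" "F \<subseteq> cone_fam T f"
    unfolding lin_span_def by blast
  have "\<forall>s\<in>F. \<exists>r. lincomb_fam r T f = s" using y(2) unfolding cone_fam_def by blast
  then obtain r where r: "\<And>s. s \<in> F \<Longrightarrow> lincomb_fam (r s) T f = s" by metis
  have "y = lincomb_fam (\<lambda>t. \<Sum>s\<in>F. c s * r s t) T f"
  proof (rule ext)
    fix i
    have "y i = (\<Sum>s\<in>F. c s * lincomb_fam (r s) T f i)"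
      unfolding y(1) lincomb_def by (rule sum.cong) (simp_all add: r)
    also have "\<dots> = (\<Sum>s\<in>F. \<Sum>t\<in>T. c s * (r s t * f t i))"
      by (simp add: lincomb_fam_def sum_distrib_left)
    also have "\<dots> = (\<Sum>t\<in>T. \<Sum>s\<in>F. c s * (r s t * f t i))"
      by (rule sum.swap)
    also have "\<dots> = lincomb_fam (\<lambda>t. \<Sum>s\<in>F. c s * r s t) T f i"
      by (simp add: lincomb_fam_def sum_distrib_right mult.assoc)
    finally show "y i = lincomb_fam (\<lambda>t. \<Sum>s\<in>F. c s * r s t) T f i" .
  qed
  then show "y \<in> span_fam T f" by (simp add: span_fam_def)
qed

lemma span_fam_insert_redundant:
  assumes "finite T" "v \<notin> T" "f v \<in> span_fam T f"
  shows "span_fam (insert v T) f = span_fam T f"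
proof
  obtain e where e: "f v = lincomb_fam e T f" using assms(3) by (auto simp: span_fam_def)
  show "span_fam (insert v T) f \<subseteq> span_fam T f"
  proof
    fix z assume "z \<in> span_fam (insert v T) f"
    then obtain c where "z = lincomb_fam c (insert v T) f" by (auto simp: span_fam_def)
    then have "z = lincomb_fam (\<lambda>t. c t + c v * e t) T f"
      using assms(1,2)
      by (simp add: lincomb_fam_insert lincomb_fam_add lincomb_fam_scale e algebra_simps)
    then show "z \<in> span_fam T f" by (simp add: span_fam_def)
  qed
  show "span_fam T f \<subseteq> span_fam (insert v T) f"
    using span_fam_mono[of "insert v T" T f] assms(1) by auto
qed

lemma span_fam_insertI:
  assumes "finite T" "v \<notin> T" "(\<lambda>i. w i - r * f v i) \<in> span_fam T f"
  shows "w \<in> span_fam (insert v T) f"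
proof -
  obtain e where e: "(\<lambda>i. w i - r * f v i) = lincomb_fam e T f"
    using assms(3) by (auto simp: span_fam_def)
  have "lincomb_fam (e(v := r)) T f = lincomb_fam e T f"
    using assms(2) by (intro lincomb_fam_cong) auto
  then have "w = lincomb_fam (e(v := r)) (insert v T) f"
    using assms(1,2) e by (auto simp: lincomb_fam_insert fun_eq_iff algebra_simps)
  then show ?thesis by (auto simp: span_fam_def)
qed

lemma span_fam_separating_form:
  assumes "finite T" "\<forall>t\<in>T. inV m (f t)" "inV m w" "w \<notin> span_fam T f"
  shows "\<exists>a. (\<forall>t\<in>T. dotp m a (f t) = 0) \<and> dotp m a w = 1"
  using assms
proof (induction T arbitrary: w rule: finite_induct)
  case empty
  then obtain i where i: "w i \<noteq> 0"
    by (auto simp: span_fam_def lincomb_fam_empty fun_eq_iff)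
  with \<open>inV m w\<close> have "i < m" by (meson inV_def not_less)
  define a where "a = (\<lambda>j. if j = i then 1 / w i else (0::rat))"
  have "dotp m a w = (\<Sum>j<m. if j = i then 1 else 0)"
    unfolding dotp_def a_def using i by (intro sum.cong) auto
  also have "\<dots> = 1" using \<open>i < m\<close> by simp
  finally show ?case by auto
next
  case (insert v T)
  have fT: "\<forall>t\<in>T. inV m (f t)" and fv: "inV m (f v)" using insert.prems(1) by auto
  show ?case
  proof (cases "f v \<in> span_fam T f")
    case True
    then obtain e where e: "f v = lincomb_fam e T f" by (auto simp: span_fam_def)
    have "w \<notin> span_fam T f"
      using insert.prems(3) span_fam_insert_redundant[OF insert.hyps True] by simp
    then obtain a where a: "\<forall>t\<in>T. dotp m a (f t) = 0" "dotp m a w = 1"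
      using insert.IH fT insert.prems(2) by blast
    have "dotp m a (f v) = 0" by (simp add: e dotp_lincomb_fam a(1))
    then show ?thesis using a by auto
  next
    case False
    then obtain av where av: "\<forall>t\<in>T. dotp m av (f t) = 0" "dotp m av (f v) = 1"
      using insert.IH fv fT by blast
    define w' where "w' = (\<lambda>i. w i - dotp m av w * f v i)"
    have "w' \<notin> span_fam T f"
      using span_fam_insertI[OF insert.hyps] insert.prems(3) by (auto simp: w'_def)
    moreover have "inV m w'" using insert.prems(2) fv by (simp add: inV_def w'_def)
    ultimately obtain a' where a': "\<forall>t\<in>T. dotp m a' (f t) = 0" "dotp m a' w' = 1"
      using insert.IH fT by blast
    define a where "a = (\<lambda>j. a' j - dotp m a' (f v) * av j)"
    have "\<forall>t\<in>insert v T. dotp m a (f t) = 0"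
      using a' av by (auto simp: a_def dotp_diff_left)
    moreover have "dotp m a w = 1"
      using a'(2) unfolding a_def w'_def dotp_diff_left dotp_diff_right by (simp add: mult.commute)
    ultimately show ?thesis by blast
  qed
qed

lemma span_fam_linear_coordinates:
  assumes "finite T" "\<forall>t\<in>T. inV m (f t)"
  shows "\<exists>a. \<forall>z\<in>span_fam T f. z = lincomb_fam (\<lambda>t. dotp m (a t) z) T f"
  using assms
proof (induction T rule: finite_induct)
  case empty
  then show ?case by (auto simp: span_fam_def lincomb_fam_empty)
next
  case (insert v T)
  have fT: "\<forall>t\<in>T. inV m (f t)" and fv: "inV m (f v)" using insert.prems by auto
  obtain a where a: "\<forall>z\<in>span_fam T f. z = lincomb_fam (\<lambda>t. dotp m (a t) z) T f"
    using insert.IH fT by blast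
  have extend: "lincomb_fam (\<lambda>t. dotp m (b t) z) (insert v T) f
      = (\<lambda>i. dotp m (b v) z * f v i + lincomb_fam (\<lambda>t. dotp m (a t) z') T f i)"
    if "\<And>t. t \<in> T \<Longrightarrow> dotp m (b t) z = dotp m (a t) z'" for b z z'
  proof -
    have "lincomb_fam (\<lambda>t. dotp m (b t) z) T f = lincomb_fam (\<lambda>t. dotp m (a t) z') T f"
      using that by (rule lincomb_fam_cong)
    then show ?thesis using insert.hyps by (simp add: lincomb_fam_insert)
  qed
  show ?case
  proof (cases "f v \<in> span_fam T f")
    case True
    have "z = lincomb_fam (\<lambda>t. dotp m ((a(v := (\<lambda>_. 0))) t) z) (insert v T) f"
      if "z \<in> span_fam (insert v T) f" for z
    proof -
      have "z = lincomb_fam (\<lambda>t. dotp m (a t) z) T f"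
        using that a span_fam_insert_redundant[OF insert.hyps True] by blast
      moreover have "dotp m ((a(v := (\<lambda>_. 0))) t) z = dotp m (a t) z" if "t \<in> T" for t
        using that insert.hyps(2) by auto
      ultimately show ?thesis
        using extend[of "a(v := (\<lambda>_. 0))" z z] by (simp add: dotp_def)
    qed
    then show ?thesis by blast
  next
    case False
    then obtain av where av: "\<forall>t\<in>T. dotp m av (f t) = 0" "dotp m av (f v) = 1"
      using span_fam_separating_form[OF insert.hyps(1) fT fv] by blast
    define a' where
      "a' = (\<lambda>t. if t = v then av else (\<lambda>j. a t j - dotp m (a t) (f v) * av j))"
    have "z = lincomb_fam (\<lambda>t. dotp m (a' t) z) (insert v T) f"
      if z: "z \<in> span_fam (insert v T) f" for z
    proof -
      obtain c where c: "z = lincomb_fam c (insert v T) f" using z by (auto simp: span_fam_def)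
      have "dotp m av z = c v" using av insert.hyps by (simp add: c dotp_lincomb_fam)
      define z' where "z' = (\<lambda>i. z i - dotp m av z * f v i)"
      have "z' = lincomb_fam c T f"
        using c \<open>dotp m av z = c v\<close> insert.hyps by (auto simp: z'_def lincomb_fam_insert)
      then have z': "z' = lincomb_fam (\<lambda>t. dotp m (a t) z') T f"
        using a by (auto simp: span_fam_def)
      have "dotp m (a' t) z = dotp m (a t) z'" if "t \<in> T" for t
      proof -
        have "dotp m (a' t) z = dotp m (a t) z - dotp m (a t) (f v) * dotp m av z"
          using that insert.hyps(2) by (auto simp: a'_def dotp_diff_left)
        also have "\<dots> = dotp m (a t) z'"
          unfolding z'_def dotp_diff_right by (simp add: mult.commute)
        finally show ?thesis .
      qed
      then have "lincomb_fam (\<lambda>t. dotp m (a' t) z) (insert v T) f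
          = (\<lambda>i. dotp m av z * f v i + z' i)"
        using extend[of a' z z'] z' by (simp add: a'_def)
      then show ?thesis by (simp add: z'_def)
    qed
    then show ?thesis by blast
  qed
qed

lemma span_fam_bounded_coordinates:
  assumes "finite T" "\<forall>t\<in>T. inV m (f t)"
  obtains K where "0 \<le> K"
    "\<And>z. z \<in> span_fam T f \<Longrightarrow>
      \<exists>d. z = lincomb_fam d T f \<and> (\<forall>t\<in>T. \<bar>d t\<bar> \<le> K * norm1 m z)"
proof -
  obtain a where a: "\<forall>z\<in>span_fam T f. z = lincomb_fam (\<lambda>t. dotp m (a t) z) T f"
    using span_fam_linear_coordinates[OF assms] by blast
  define K where "K = (\<Sum>t\<in>T. norm1 m (a t))"
  have "\<bar>dotp m (a t) z\<bar> \<le> K * norm1 m z" if "t \<in> T" for t z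
  proof -
    have "\<bar>dotp m (a t) z\<bar> \<le> norm1 m (a t) * norm1 m z" by (rule abs_dotp_le)
    also have "\<dots> \<le> K * norm1 m z"
      unfolding K_def using that assms(1)
      by (intro mult_right_mono member_le_sum norm1_nonneg) auto
    finally show ?thesis .
  qed
  moreover have "0 \<le> K" by (simp add: K_def sum_nonneg norm1_nonneg)
  ultimately show thesis using that a by blast
qed

(* Points of the span have coefficients bounded by a multiple of their norm, so a small
   perturbation of a strictly positive combination stays in the cone. *)
lemma positive_lincomb_fam_in_relint:
  assumes fin: "finite T" and fV: "\<forall>t\<in>T. inV m (f t)" and cpos: "\<forall>t\<in>T. 0 < c t"
  shows "lincomb_fam c T f \<in> relint (cone_fam T f)"
proof -
  let ?x = "lincomb_fam c T f"
  obtain K where K: "0 \<le> K"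
    "\<And>z. z \<in> span_fam T f \<Longrightarrow>
      \<exists>d. z = lincomb_fam d T f \<and> (\<forall>t\<in>T. \<bar>d t\<bar> \<le> K * norm1 m z)"
    using span_fam_bounded_coordinates[OF fin fV] by blast
  define \<delta> where "\<delta> = Min (insert 1 (c ` T))"
  have \<delta>: "\<delta> > 0" "\<forall>t\<in>T. \<delta> \<le> c t"
    using fin cpos by (auto simp: \<delta>_def Min_gr_iff)
  define \<epsilon> where "\<epsilon> = \<delta> / (K * of_nat m + 1)"
  have "0 < K * of_nat m + 1" using K(1) by (simp add: add_nonneg_pos)
  then have \<epsilon>: "\<epsilon> > 0" "K * (of_nat m * \<epsilon>) < \<delta>"
    using \<delta>(1) by (auto simp: \<epsilon>_def field_simps)
  have "y \<in> cone_fam T f" if y: "y \<in> lin_span (cone_fam T f)" "\<forall>i. \<bar>y i - ?x i\<bar> < \<epsilon>" for y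
  proof -
    define z where "z = (\<lambda>i. y i - ?x i)"
    have "y \<in> span_fam T f" using y(1) lin_span_cone_fam_subset by blast
    then obtain e where "y = lincomb_fam e T f" by (auto simp: span_fam_def)
    then have "z \<in> span_fam T f" by (auto simp: z_def span_fam_def lincomb_fam_diff[symmetric])
    then obtain d where d: "z = lincomb_fam d T f" "\<forall>t\<in>T. \<bar>d t\<bar> \<le> K * norm1 m z"
      using K(2) by blast
    have "norm1 m z \<le> of_nat m * \<epsilon>"
      using sum_mono[of "{..<m}" "\<lambda>i. \<bar>z i\<bar>" "\<lambda>_. \<epsilon>"] y(2)
      by (simp add: norm1_def z_def less_imp_le)
    then have "K * norm1 m z < \<delta>"
      using \<epsilon>(2) K(1) by (meson mult_left_mono le_less_trans)
    then have "\<forall>t\<in>T. 0 \<le> c t + d t"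
      using d(2) \<delta>(2) by (fastforce simp: abs_le_iff)
    moreover have "y = lincomb_fam (\<lambda>t. c t + d t) T f"
      by (simp add: lincomb_fam_add d(1)[symmetric] z_def)
    ultimately show ?thesis by (auto simp: cone_fam_def)
  qed
  moreover have "?x \<in> cone_fam T f" using cpos by (auto simp: cone_fam_def less_imp_le)
  ultimately show ?thesis unfolding relint_def using \<epsilon>(1) by blast
qed

lemma relint_stretch:
  assumes x: "x \<in> relint \<tau>" and y: "y \<in> \<tau>" and V: "inV m x" "inV m y"
  obtains \<delta> where "0 < \<delta>" "(\<lambda>i. (1 + \<delta>) * x i - \<delta> * y i) \<in> \<tau>"
proof -
  obtain \<epsilon> where \<epsilon>: "\<epsilon> > 0" "\<forall>p\<in>lin_span \<tau>. (\<forall>i. \<bar>p i - x i\<bar> < \<epsilon>) \<longrightarrow> p \<in> \<tau>"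
    using x by (auto simp: relint_def)
  define M where "M = 1 + norm1 m (\<lambda>i. x i - y i)"
  have M: "\<bar>x i - y i\<bar> < M" for i
    using abs_le_norm1[of i m "\<lambda>i. x i - y i"] norm1_nonneg[of m "\<lambda>i. x i - y i"] V
    by (cases "i < m") (auto simp: M_def inV_def)
  then have "M > 0" by (meson abs_ge_zero le_less_trans)
  define \<delta> where "\<delta> = \<epsilon> / M"
  have \<delta>: "\<delta> > 0" "\<delta> * M = \<epsilon>" using \<open>M > 0\<close> \<epsilon>(1) by (auto simp: \<delta>_def)
  define p where "p = (\<lambda>i. (1 + \<delta>) * x i - \<delta> * y i)"
  have "x \<in> \<tau>" using x by (auto simp: relint_def)
  have "p = lincomb (\<lambda>v. if v = x then 1 + \<delta> else - \<delta>) {x, y}" if "x \<noteq> y"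
    using that by (auto simp: p_def lincomb_def)
  moreover have "p = lincomb (\<lambda>_. 1) {x}" if "x = y"
    using that by (auto simp: p_def lincomb_def algebra_simps)
  ultimately have "p \<in> lin_span \<tau>"
    unfolding lin_span_def using \<open>x \<in> \<tau>\<close> y by (cases "x = y") blast+
  moreover have "\<bar>p i - x i\<bar> < \<epsilon>" for i
  proof -
    have "p i - x i = \<delta> * (x i - y i)" by (simp add: p_def algebra_simps)
    then have "\<bar>p i - x i\<bar> = \<delta> * \<bar>x i - y i\<bar>" using \<delta>(1) by (simp add: abs_mult)
    also have "\<dots> < \<epsilon>" using M[of i] \<delta> by (metis mult_strict_left_mono)
    finally show ?thesis .
  qed
  ultimately have "p \<in> \<tau>" using \<epsilon>(2) by blast
  then show thesis using that \<delta>(1) p_def by blast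
qed

definition positive_support :: "'a set \<Rightarrow> ('a \<Rightarrow> qvec) \<Rightarrow> qvec \<Rightarrow> 'a set" where
  "positive_support T f x =
     {t\<in>T. \<exists>c. (\<forall>s\<in>T. 0 \<le> c s) \<and> x = lincomb_fam c T f \<and> 0 < c t}"

(* Stretching x away from y inside tau writes x as a combination in which every generator
   used by y has a positive coefficient. *)
lemma relint_subset_cone_positive_support:
  assumes fin: "finite T" and fV: "\<forall>t\<in>T. inV m (f t)" and sub: "\<tau> \<subseteq> cone_fam T f"
    and x: "x \<in> relint \<tau>"
  shows "\<tau> \<subseteq> cone_fam (positive_support T f x) f"
proof
  fix y assume y: "y \<in> \<tau>"
  have inV_cone: "inV m z" if "z \<in> cone_fam T f" for z
    using that fV inV_lincomb_fam by (auto simp: cone_fam_def)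
  have "x \<in> \<tau>" using x by (auto simp: relint_def)
  then obtain \<delta> where \<delta>: "0 < \<delta>" "(\<lambda>i. (1 + \<delta>) * x i - \<delta> * y i) \<in> \<tau>"
    using relint_stretch[OF x y] inV_cone sub y by blast
  then obtain e where e: "(\<lambda>i. (1 + \<delta>) * x i - \<delta> * y i) = lincomb_fam e T f" "\<forall>t\<in>T. 0 \<le> e t"
    using sub by (auto simp: cone_fam_def)
  obtain g where g: "y = lincomb_fam g T f" "\<forall>t\<in>T. 0 \<le> g t"
    using y sub by (auto simp: cone_fam_def)
  define c where "c = (\<lambda>t. inverse (1 + \<delta>) * (e t + \<delta> * g t))"
  have "x = lincomb_fam c T f"
  proof (rule ext)
    fix i
    have "lincomb_fam c T f i = inverse (1 + \<delta>) * ((1 + \<delta>) * x i - \<delta> * y i + \<delta> * y i)"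
      unfolding c_def lincomb_fam_scale lincomb_fam_add e(1)[symmetric] g(1) by simp
    also have "\<dots> = x i" using \<delta>(1) by (simp add: field_simps)
    finally show "x i = lincomb_fam c T f i" ..
  qed
  moreover have c_nonneg: "\<forall>t\<in>T. 0 \<le> c t" using e(2) g(2) \<delta>(1) by (simp add: c_def)
  ultimately have "g t = 0" if t: "t \<in> T - positive_support T f x" for t
  proof -
    have "\<not> 0 < c t" using t c_nonneg \<open>x = lincomb_fam c T f\<close>
      by (auto simp: positive_support_def)
    then have "e t + \<delta> * g t \<le> 0" using \<delta>(1) by (simp add: c_def zero_less_mult_iff)
    moreover have "0 \<le> e t" "0 \<le> \<delta> * g t" using t e(2) g(2) \<delta>(1) by auto
    ultimately have "\<delta> * g t = 0" by linarith
    then show "g t = 0" using \<delta>(1) by simp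
  qed
  moreover have "positive_support T f x \<subseteq> T" by (auto simp: positive_support_def)
  ultimately have "y = lincomb_fam g (positive_support T f x) f"
    using g(1) lincomb_fam_zero_outside[OF fin] by blast
  then show "y \<in> cone_fam (positive_support T f x) f"
    using g(2) by (auto simp: cone_fam_def positive_support_def)
qed

lemma positive_support_full_imp_positive_lincomb_fam:
  assumes fin: "finite T" and x: "x \<in> cone_fam T f" and full: "positive_support T f x = T"
  obtains c where "\<forall>t\<in>T. 0 < c t" "x = lincomb_fam c T f"
proof (cases "T = {}")
  case True
  then show thesis using that x by (auto simp: cone_fam_def lincomb_fam_empty)
next
  case False
  have "\<forall>t\<in>T. \<exists>c. (\<forall>s\<in>T. 0 \<le> c s) \<and> x = lincomb_fam c T f \<and> 0 < c t"
    using full by (auto simp: positive_support_def)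
  then obtain C where
    C: "\<And>t. t \<in> T \<Longrightarrow> (\<forall>s\<in>T. 0 \<le> C t s) \<and> x = lincomb_fam (C t) T f \<and> 0 < C t t"
    by metis
  define k where "k = (of_nat (card T) :: rat)"
  have "k > 0" using False fin by (simp add: k_def card_gt_0_iff)
  define c where "c = (\<lambda>s. inverse k * (\<Sum>t\<in>T. C t s))"
  have "lincomb_fam c T f = x"
  proof (rule ext)
    fix i
    have "lincomb_fam c T f i = inverse k * (\<Sum>t\<in>T. lincomb_fam (C t) T f i)"
      unfolding c_def lincomb_fam_scale lincomb_fam_sum by simp
    also have "\<dots> = inverse k * (\<Sum>t\<in>T. x i)" using C by simp
    also have "\<dots> = x i" using \<open>k > 0\<close> by (simp add: k_def)
    finally show "lincomb_fam c T f i = x i" .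
  qed
  moreover have "0 < c s" if s: "s \<in> T" for s
  proof -
    have "C s s \<le> (\<Sum>t\<in>T. C t s)" using s fin C by (intro member_le_sum) auto
    then have "0 < (\<Sum>t\<in>T. C t s)" using C s by (meson less_le_trans)
    then show ?thesis using \<open>k > 0\<close> by (simp add: c_def)
  qed
  ultimately show thesis using that by auto
qed

lemma relint_subset_relint_cone_fam:
  assumes fin: "finite T" and fV: "\<forall>t\<in>T. inV m (f t)" and sub: "\<tau> \<subseteq> cone_fam T f"
    and minimal: "\<And>T'. T' \<subset> T \<Longrightarrow> \<not> \<tau> \<subseteq> cone_fam T' f"
  shows "relint \<tau> \<subseteq> relint (cone_fam T f)"
proof
  fix x assume x: "x \<in> relint \<tau>"
  have "positive_support T f x \<subseteq> T" by (auto simp: positive_support_def)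
  then have "positive_support T f x = T"
    using minimal relint_subset_cone_positive_support[OF fin fV sub x] by blast
  moreover have "x \<in> cone_fam T f" using x sub by (auto simp: relint_def)
  ultimately obtain c where "\<forall>t\<in>T. 0 < c t" "x = lincomb_fam c T f"
    using positive_support_full_imp_positive_lincomb_fam fin by metis
  then show "x \<in> relint (cone_fam T f)"
    using positive_lincomb_fam_in_relint[OF fin fV] by simp
qed

lemma lin_indep_not_in_span_fam:
  assumes fin: "finite S" and li: "lin_indep S" and s: "s \<in> S"
  shows "s \<notin> span_fam (S - {s}) id"
proof
  assume "s \<in> span_fam (S - {s}) id"
  then obtain d where d: "s = lincomb_fam d (S - {s}) id" by (auto simp: span_fam_def)
  have "lincomb_fam (d(s := -1)) (S - {s}) id = lincomb_fam d (S - {s}) id"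
    by (rule lincomb_fam_cong) simp
  then have "lincomb (d(s := -1)) S = (\<lambda>_. 0)"
    using lincomb_fam_insert[of "S - {s}" s "d(s := -1)" id] fin s d
    by (simp add: lincomb_eq_lincomb_fam insert_absorb)
  then have "(d(s := -1)) s = 0"
    using li fin s unfolding lin_indep_def by blast
  then show False by simp
qed

lemma lin_indep_biorthogonal:
  assumes fin: "finite S" and SV: "\<forall>s\<in>S. inV n s" and li: "lin_indep S"
  obtains A where "biorthogonal n S A"
proof -
  have "\<exists>a. dotp n a s = 1 \<and> (\<forall>s'\<in>S - {s}. dotp n a s' = 0)" if s: "s \<in> S" for s
    using span_fam_separating_form[of "S - {s}" n id s] lin_indep_not_in_span_fam[OF fin li s]
      fin SV s by auto
  then obtain A where "\<forall>s\<in>S. dotp n (A s) s = 1 \<and> (\<forall>s'\<in>S - {s}. dotp n (A s) s' = 0)"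
    by metis
  then have "biorthogonal n S A" by (auto simp: biorthogonal_def)
  then show thesis by (rule that)
qed

lemma simplicial_full_cone_biorthogonal:
  assumes "simplicial_full_cone n \<gamma>"
  obtains S A where "finite S" "biorthogonal n S A" "\<gamma> = cone_fam S id"
proof -
  obtain S where "finite S" "\<forall>s\<in>S. inV n s" "lin_indep S" "\<gamma> = cone_gen S"
    using assms unfolding simplicial_full_cone_def by blast
  moreover obtain A where "biorthogonal n S A"
    using lin_indep_biorthogonal calculation by blast
  ultimately show thesis using that cone_gen_eq_cone_fam by simp
qed

lemma biorthogonal_coefficient:
  assumes "finite S" "biorthogonal n S A" "s \<in> S"
  shows "dotp n (A s) (lincomb_fam c S id) = c s"
proof -
  have "dotp n (A s) (lincomb_fam c S id) = (\<Sum>t\<in>S. if t = s then c t else 0)"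
    unfolding dotp_lincomb_fam using assms by (intro sum.cong) (auto simp: biorthogonal_def)
  also have "\<dots> = c s" using assms by simp
  finally show ?thesis .
qed

lemma face_of_cone_fam:
  assumes fin: "finite S" and face: "is_face n \<gamma>0 (cone_fam S id)"
  obtains T where "T \<subseteq> S" "\<gamma>0 = cone_fam T id"
proof -
  obtain u where u: "\<forall>x\<in>cone_fam S id. 0 \<le> dotp n u x" "\<gamma>0 = {x\<in>cone_fam S id. dotp n u x = 0}"
    using face unfolding is_face_def by blast
  define T where "T = {s\<in>S. dotp n u s = 0}"
  have u_gen: "0 \<le> dotp n u s" if "s \<in> S" for s
    using u(1) generator_in_cone_fam[OF fin that, of id] by simp
  have "\<gamma>0 \<subseteq> cone_fam T id"
  proof
    fix x assume "x \<in> \<gamma>0"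
    then obtain c where c: "x = lincomb_fam c S id" "\<forall>s\<in>S. 0 \<le> c s" "dotp n u x = 0"
      using u(2) by (auto simp: cone_fam_def)
    have "(\<Sum>s\<in>S. c s * dotp n u s) = 0" using c by (simp add: dotp_lincomb_fam)
    moreover have "\<forall>s\<in>S. 0 \<le> c s * dotp n u s" using c(2) u_gen by simp
    ultimately have "\<forall>s\<in>S. c s * dotp n u s = 0"
      using sum_nonneg_eq_0_iff[OF fin, of "\<lambda>s. c s * dotp n u s"] by blast
    then have "lincomb_fam c S id = lincomb_fam c T id"
      using lincomb_fam_zero_outside[OF fin, of T c id] by (auto simp: T_def)
    then show "x \<in> cone_fam T id" using c(1,2) by (auto simp: cone_fam_def T_def)
  qed
  moreover have "cone_fam T id \<subseteq> \<gamma>0"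
  proof
    fix x assume x: "x \<in> cone_fam T id"
    then obtain c where "x = lincomb_fam c T id" by (auto simp: cone_fam_def)
    then have "dotp n u x = 0" by (simp add: dotp_lincomb_fam T_def)
    moreover have "x \<in> cone_fam S id" using cone_fam_mono[OF fin, of T id] x by (auto simp: T_def)
    ultimately show "x \<in> \<gamma>0" using u(2) by blast
  qed
  moreover have "T \<subseteq> S" by (auto simp: T_def)
  ultimately show thesis using that by blast
qed

lemma biorthogonal_cone_fam_face:
  assumes fin: "finite S" and A: "biorthogonal n S A" and TS: "T \<subseteq> S"
  shows "is_face n (cone_fam T id) (cone_fam S id)"
proof -
  define u where "u = (\<lambda>j. if j < n then \<Sum>s\<in>S - T. A s j else 0)"
  have "inV n u" by (simp add: inV_def u_def)
  have u_coeff: "dotp n u (lincomb_fam c S id) = (\<Sum>s\<in>S - T. c s)" for c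
  proof -
    have "dotp n u x = (\<Sum>s\<in>S - T. dotp n (A s) x)" for x
      unfolding dotp_def u_def by (simp add: sum_distrib_right sum.swap[of _ "S - T"])
    then show ?thesis using biorthogonal_coefficient[OF fin A] by simp
  qed
  have cone_T:
    "cone_fam T id = {lincomb_fam c S id | c. (\<forall>s\<in>S. 0 \<le> c s) \<and> (\<forall>s\<in>S - T. c s = 0)}"
  proof (intro equalityI subsetI)
    fix x assume "x \<in> cone_fam T id"
    then obtain c where c: "x = lincomb_fam c T id" "\<forall>t\<in>T. 0 \<le> c t" by (auto simp: cone_fam_def)
    then have "x = lincomb_fam (\<lambda>s. if s \<in> T then c s else 0) S id"
      using lincomb_fam_extend[OF fin TS] by simp
    then show "x \<in> {lincomb_fam c S id | c. (\<forall>s\<in>S. 0 \<le> c s) \<and> (\<forall>s\<in>S - T. c s = 0)}"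
      using c(2) by force
  next
    fix x assume "x \<in> {lincomb_fam c S id | c. (\<forall>s\<in>S. 0 \<le> c s) \<and> (\<forall>s\<in>S - T. c s = 0)}"
    then obtain c where c: "x = lincomb_fam c S id" "\<forall>s\<in>S. 0 \<le> c s" "\<forall>s\<in>S - T. c s = 0"
      by blast
    then have "x = lincomb_fam c T id" using lincomb_fam_zero_outside[OF fin TS] by simp
    then show "x \<in> cone_fam T id" using c(2) TS by (auto simp: cone_fam_def)
  qed
  have "0 \<le> dotp n u x" if "x \<in> cone_fam S id" for x
    using that by (auto simp: cone_fam_def u_coeff intro!: sum_nonneg)
  moreover have "cone_fam T id = {x\<in>cone_fam S id. dotp n u x = 0}"
  proof -
    have "(\<Sum>s\<in>S - T. c s) = 0 \<longleftrightarrow> (\<forall>s\<in>S - T. c s = 0)"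
      if "\<forall>s\<in>S. 0 \<le> c s" for c :: "qvec \<Rightarrow> rat"
      using that fin by (intro sum_nonneg_eq_0_iff) auto
    then show ?thesis unfolding cone_T by (auto simp: cone_fam_def u_coeff)
  qed
  ultimately show ?thesis unfolding is_face_def using \<open>inV n u\<close> by blast
qed

lemma biorthogonal_cone_fam_strict_mono:
  assumes fin: "finite S" and A: "biorthogonal n S A" and TS: "T \<subseteq> S" and T'T: "T' \<subset> T"
  shows "cone_fam T' id \<subset> cone_fam T id"
proof -
  have finT: "finite T" using fin TS finite_subset by blast
  obtain t where t: "t \<in> T" "t \<notin> T'" using T'T by blast
  have "t \<notin> cone_fam T' id"
  proof
    assume "t \<in> cone_fam T' id"
    then obtain c where c: "t = lincomb_fam c T' id" by (auto simp: cone_fam_def)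
    have "dotp n (A t) t = (\<Sum>s\<in>T'. c s * dotp n (A t) s)"
      by (subst (2) c) (simp add: dotp_lincomb_fam)
    also have "\<dots> = 0"
    proof (intro sum.neutral ballI)
      fix s assume "s \<in> T'"
      then have "s \<noteq> t" "s \<in> S" using t TS T'T by auto
      then show "c s * dotp n (A t) s = 0"
        using A[unfolded biorthogonal_def, rule_format, of t s] t TS by auto
    qed
    finally show False using A[unfolded biorthogonal_def, rule_format, of t t] t TS by auto
  qed
  moreover have "t \<in> cone_fam T id" using generator_in_cone_fam[OF finT t(1), of id] by simp
  ultimately show ?thesis using cone_fam_mono[OF finT, of T' id] T'T by blast
qed

lemma proj_face_relint_nonempty:
  assumes "simplicial_full_cone n \<gamma>" and "proj_face m n Q \<gamma> \<tau>"
  shows "relint \<tau> \<noteq> {}"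
proof -
  obtain S A where S: "finite S" "\<gamma> = cone_fam S id"
    using simplicial_full_cone_biorthogonal[OF assms(1)] by metis
  obtain \<gamma>0 where "is_face n \<gamma>0 \<gamma>" "\<tau> = qmap m n Q ` \<gamma>0"
    using assms(2) unfolding proj_face_def by blast
  moreover obtain T where "T \<subseteq> S" "\<gamma>0 = cone_fam T id"
    using face_of_cone_fam S calculation(1) by metis
  ultimately have "\<tau> = cone_fam T (qmap m n Q)" "finite T"
    using qmap_image_cone_fam S(1) finite_subset by auto
  then show ?thesis
    using positive_lincomb_fam_in_relint[of T m "qmap m n Q" "\<lambda>_. 1"] inV_qmap by auto
qed

lemma cov_relint_subset:
  assumes "simplicial_full_cone n \<gamma>" and "\<gamma>' \<in> cov m n Q \<gamma> \<Theta>"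
  obtains \<tau> where "\<tau> \<in> \<Theta>" "relint \<tau> \<subseteq> relint (qmap m n Q ` \<gamma>')"
proof -
  let ?q = "qmap m n Q"
  obtain S A where S: "finite S" "biorthogonal n S A" "\<gamma> = cone_fam S id"
    using simplicial_full_cone_biorthogonal[OF assms(1)] by metis
  from assms(2) have face: "is_face n \<gamma>' \<gamma>" and "\<exists>\<tau>\<in>\<Theta>. \<tau> \<subseteq> ?q ` \<gamma>'"
    and minimal: "\<And>\<gamma>1. is_face n \<gamma>1 \<gamma> \<Longrightarrow> \<gamma>1 \<subset> \<gamma>' \<Longrightarrow> \<not> (\<exists>\<tau>\<in>\<Theta>. \<tau> \<subseteq> ?q ` \<gamma>1)"
    unfolding cov_def by auto
  then obtain \<tau> where \<tau>: "\<tau> \<in> \<Theta>" "\<tau> \<subseteq> ?q ` \<gamma>'" by blast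
  obtain T where T: "T \<subseteq> S" "\<gamma>' = cone_fam T id"
    using face_of_cone_fam S(1) face S(3) by metis
  have "relint \<tau> \<subseteq> relint (cone_fam T ?q)"
  proof (rule relint_subset_relint_cone_fam)
    show "finite T" using T(1) S(1) finite_subset by blast
    show "\<forall>t\<in>T. inV m (?q t)" by (simp add: inV_qmap)
    show "\<tau> \<subseteq> cone_fam T ?q" using \<tau>(2) T(2) qmap_image_cone_fam by simp
    fix T' assume "T' \<subset> T"
    then have "is_face n (cone_fam T' id) \<gamma>" "cone_fam T' id \<subset> \<gamma>'"
      using biorthogonal_cone_fam_face[OF S(1,2)] biorthogonal_cone_fam_strict_mono[OF S(1,2) T(1)]
        T S(3) by auto
    then show "\<not> \<tau> \<subseteq> cone_fam T' ?q" using minimal \<tau>(1) qmap_image_cone_fam by metis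
  qed
  then show thesis using that \<tau>(1) T(2) qmap_image_cone_fam by metis
qed

lemma bunch_relint_meet:
  assumes "simplicial_full_cone n \<gamma>" and bunch: "is_bunch m n Q \<gamma> \<Theta>"
    and "\<tau>1 \<in> \<Theta>" "\<tau>2 \<in> \<Theta>"
  shows "relint \<tau>1 \<inter> relint \<tau>2 \<noteq> {}"
proof (cases "\<tau>1 = \<tau>2")
  case True
  have "proj_face m n Q \<gamma> \<tau>2" using bunch \<open>\<tau>2 \<in> \<Theta>\<close> by (auto simp: is_bunch_def)
  then show ?thesis using True proj_face_relint_nonempty[OF assms(1)] by simp
next
  case False
  then show ?thesis using bunch \<open>\<tau>1 \<in> \<Theta>\<close> \<open>\<tau>2 \<in> \<Theta>\<close> unfolding is_bunch_def by blast
qed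

theorem lemma2p5:
  fixes m n :: nat and Q :: "nat \<Rightarrow> nat \<Rightarrow> int" and \<gamma> :: "qvec set"
    and \<Theta> :: "qvec set set" and \<gamma>1 \<gamma>2 :: "qvec set"
  assumes "projected_cone m n Q \<gamma>"
    and "is_bunch m n Q \<gamma> \<Theta>"
    and "\<gamma>1 \<in> cov m n Q \<gamma> \<Theta>"
    and "\<gamma>2 \<in> cov m n Q \<gamma> \<Theta>"
  shows "relint (qmap m n Q ` \<gamma>1) \<inter> relint (qmap m n Q ` \<gamma>2) \<noteq> {}"
proof -
  have simplicial: "simplicial_full_cone n \<gamma>"
    using assms(1) by (simp add: projected_cone_def)
  obtain \<tau>1 where "\<tau>1 \<in> \<Theta>" "relint \<tau>1 \<subseteq> relint (qmap m n Q ` \<gamma>1)"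
    using cov_relint_subset[OF simplicial assms(3)] .
  moreover obtain \<tau>2 where "\<tau>2 \<in> \<Theta>" "relint \<tau>2 \<subseteq> relint (qmap m n Q ` \<gamma>2)"
    using cov_relint_subset[OF simplicial assms(4)] .
  moreover have "relint \<tau>1 \<inter> relint \<tau>2 \<noteq> {}"
    using bunch_relint_meet[OF simplicial assms(2)] calculation by blast
  ultimately show ?thesis by blast
qed

end
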